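(* For $r\ge2$ and odd $s\ge3$: $\operatorname{zir}(H(r,s))=2$, $\operatorname{Z}(H(r,s))=r$, and $\operatorname{ZIR}(H(r,s))=r+\frac{s-1}{2}$. For $r\ge2$ and odd $s\ge5$, $\overline{\operatorname{Z}}(H(r,s))=r+1$. For $r\ge2$, $\overline{\operatorname{Z}}(H(r,3))=r$.
   Context: $H(r,s)$ is built as follows: take $K_{2,r}$ with smaller part $\{u,u'\}$ and larger part $\{w_1,\dots,w_r\}$, and the path $P_s$ with vertices $y_1,\dots,y_s$ in path order; identify $u'$ with $y_s$. It has order $r+s+1$. Zero forcing: a blue vertex $u$ changes a white vertex $w$ to blue if $w$ is the only white neighbor of $u$; $B$ is a zero forcing set if from blue set $B$ eventually all vertices are blue; $\operatorname{Z}(G)$ is the minimum size of a zero forcing set and $\overline{\operatorname{Z}}(G)$ the maximum size of an inclusion-minimal zero forcing set. A nonempty $F\subseteq V(G)$ is a fort if every $v\notin F$ has $|N(v)\cap F|\ne1$. A private fort of $x\in S$ relative to $S$ is a fort $F$ with $S\cap F=\{x\}$; $S$ is a ZIr-set if every element of $S$ has a private fort. $\operatorname{zir}(G)$ / $\operatorname{ZIR}(G)$ are the minimum / maximum cardinality of an inclusion-maximal ZIr-set. *)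

theory Defs
  imports Main
begin

definition nbhd :: "'a set \<Rightarrow> ('a \<Rightarrow> 'a \<Rightarrow> bool) \<Rightarrow> 'a \<Rightarrow> 'a set" where
  "nbhd V E v = {w \<in> V. E v w}"

text \<open>Vertices eventually coloured blue starting from blue set B, by the zero forcing
  colour change rule (a blue vertex u forces w if w is its only white neighbour).\<close>
inductive_set zf_closure :: "'a set \<Rightarrow> ('a \<Rightarrow> 'a \<Rightarrow> bool) \<Rightarrow> 'a set \<Rightarrow> 'a set"
  for V :: "'a set" and E :: "'a \<Rightarrow> 'a \<Rightarrow> bool" and B :: "'a set" where
  init: "v \<in> B \<Longrightarrow> v \<in> V \<Longrightarrow> v \<in> zf_closure V E B"
| force: "u \<in> zf_closure V E B \<Longrightarrow> w \<in> nbhd V E u \<Longrightarrow>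
          (\<forall>x \<in> nbhd V E u - {w}. x \<in> zf_closure V E B) \<Longrightarrow> w \<in> zf_closure V E B"

definition zf_set :: "'a set \<Rightarrow> ('a \<Rightarrow> 'a \<Rightarrow> bool) \<Rightarrow> 'a set \<Rightarrow> bool" where
  "zf_set V E B \<longleftrightarrow> B \<subseteq> V \<and> zf_closure V E B = V"

definition minimal_zf_set :: "'a set \<Rightarrow> ('a \<Rightarrow> 'a \<Rightarrow> bool) \<Rightarrow> 'a set \<Rightarrow> bool" where
  "minimal_zf_set V E B \<longleftrightarrow> zf_set V E B \<and> (\<forall>B'. B' \<subset> B \<longrightarrow> \<not> zf_set V E B')"

definition Z :: "'a set \<Rightarrow> ('a \<Rightarrow> 'a \<Rightarrow> bool) \<Rightarrow> nat" where
  "Z V E = Min (card ` {B. zf_set V E B})"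

definition Zbar :: "'a set \<Rightarrow> ('a \<Rightarrow> 'a \<Rightarrow> bool) \<Rightarrow> nat" where
  "Zbar V E = Max (card ` {B. minimal_zf_set V E B})"

definition fort :: "'a set \<Rightarrow> ('a \<Rightarrow> 'a \<Rightarrow> bool) \<Rightarrow> 'a set \<Rightarrow> bool" where
  "fort V E F \<longleftrightarrow> F \<noteq> {} \<and> F \<subseteq> V \<and> (\<forall>v \<in> V - F. card (nbhd V E v \<inter> F) \<noteq> 1)"

definition ZIr_set :: "'a set \<Rightarrow> ('a \<Rightarrow> 'a \<Rightarrow> bool) \<Rightarrow> 'a set \<Rightarrow> bool" where
  "ZIr_set V E S \<longleftrightarrow> S \<subseteq> V \<and> (\<forall>x \<in> S. \<exists>F. fort V E F \<and> S \<inter> F = {x})"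

definition maximal_ZIr_set :: "'a set \<Rightarrow> ('a \<Rightarrow> 'a \<Rightarrow> bool) \<Rightarrow> 'a set \<Rightarrow> bool" where
  "maximal_ZIr_set V E S \<longleftrightarrow> ZIr_set V E S \<and> (\<forall>S'. S \<subset> S' \<longrightarrow> S' \<subseteq> V \<longrightarrow> \<not> ZIr_set V E S')"

definition zir :: "'a set \<Rightarrow> ('a \<Rightarrow> 'a \<Rightarrow> bool) \<Rightarrow> nat" where
  "zir V E = Min (card ` {S. maximal_ZIr_set V E S})"

definition ZIR :: "'a set \<Rightarrow> ('a \<Rightarrow> 'a \<Rightarrow> bool) \<Rightarrow> nat" where
  "ZIR V E = Max (card ` {S. maximal_ZIr_set V E S})"

text \<open>Vertices: U = u, W i = w_i (1 \<le> i \<le> r), Y j = y_j (1 \<le> j \<le> s);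
  the vertex u' of K_{2,r} is identified with Y s.\<close>
datatype hvert = U | W nat | Y nat

definition H_V :: "nat \<Rightarrow> nat \<Rightarrow> hvert set" where
  "H_V r s = {U} \<union> W ` {1..r} \<union> Y ` {1..s}"

definition H_E :: "nat \<Rightarrow> nat \<Rightarrow> hvert \<Rightarrow> hvert \<Rightarrow> bool" where
  "H_E r s a b \<longleftrightarrow>
     (\<exists>i \<in> {1..r}. {a, b} = {U, W i} \<or> {a, b} = {Y s, W i}) \<or>
     (\<exists>j \<in> {1..<s}. {a, b} = {Y j, Y (Suc j)})"

end

theory Submission
  imports Defs
begin

text \<open>
  A set is zero forcing iff it meets every fort. A vertex of degree two outside a fort has
  both or neither of its neighbours in the fort; since the \<open>w\<^sub>i\<close> and the inner path
  vertices have degree two, every fort of \<open>H(r,s)\<close> contains two of the \<open>w\<^sub>i\<close>, or it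
  contains \<open>u\<close>, \<open>y\<^sub>1\<close>, \<open>y\<^sub>s\<close> and one of any two consecutive path vertices; conversely
  all these sets are forts. Hence \<open>B\<close> is zero forcing iff it misses at most one \<open>w\<^sub>i\<close> and
  contains \<open>u\<close>, \<open>y\<^sub>1\<close>, \<open>y\<^sub>s\<close> or two consecutive path vertices, which yields \<open>Z\<close> and
  \<open>Zbar\<close>.

  A fort meeting the path misses no two consecutive path vertices, so for odd \<open>s\<close> it misses
  at most \<open>(s - 1)/2\<close> of them. Applied to private forts this bounds a ZIr-set by
  \<open>r + (s - 1)/2\<close>, attained by all \<open>w\<^sub>i\<close> together with the even path vertices.
  Every vertex lies in one of two disjoint forts, so maximal ZIr-sets have at least two
  elements, and \<open>{u, y\<^sub>1}\<close> is maximal since a private fort avoiding \<open>y\<^sub>1\<close> avoids the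
  whole path and, if it contains \<open>u\<close>, contains every \<open>w\<^sub>i\<close>.
\<close>

section \<open>Zero forcing and forts\<close>

lemma zf_closure_subset: "zf_closure V E B \<subseteq> V"
  by (auto elim: zf_closure.cases simp: nbhd_def)

lemma fort_nbhd_Int_ne_1: "fort V E F \<Longrightarrow> v \<in> V \<Longrightarrow> v \<notin> F \<Longrightarrow> card (nbhd V E v \<inter> F) \<noteq> 1"
  by (auto simp: fort_def)

lemma zf_closure_disjoint_fort:
  assumes F: "fort V E F" and disj: "F \<inter> B = {}"
  shows "zf_closure V E B \<inter> F = {}"
proof -
  have "x \<notin> F" if "x \<in> zf_closure V E B" for x
    using that
  proof (induction rule: zf_closure.induct)
    case (init v)
    then show ?case using disj by auto
  next
    case (force u w)
    show ?case
    proof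
      assume wF: "w \<in> F"
      have "nbhd V E u \<inter> F = {w}" using force.IH force.hyps wF by auto
      moreover have "u \<in> V" "u \<notin> F" using force zf_closure_subset[of V E B] by blast+
      ultimately show False using fort_nbhd_Int_ne_1[OF F, of u] by simp
    qed
  qed
  then show ?thesis by blast
qed

text \<open>A vertex outside the closure with exactly one neighbour outside it would force that neighbour.\<close>
lemma fort_compl_zf_closure:
  assumes "zf_closure V E B \<noteq> V"
  shows "fort V E (V - zf_closure V E B)"
  unfolding fort_def
proof (intro conjI ballI)
  let ?C = "zf_closure V E B"
  show "V - ?C \<noteq> {}" using assms zf_closure_subset[of V E B] by blast
  show "V - ?C \<subseteq> V" by blast
  fix v assume v: "v \<in> V - (V - ?C)"
  show "card (nbhd V E v \<inter> (V - ?C)) \<noteq> 1"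
  proof
    assume "card (nbhd V E v \<inter> (V - ?C)) = 1"
    then obtain w where w: "nbhd V E v \<inter> (V - ?C) = {w}" by (auto simp: card_1_singleton_iff)
    have "w \<in> ?C"
      by (rule zf_closure.force[of v]) (use v w in \<open>auto simp: nbhd_def\<close>)
    then show False using w by blast
  qed
qed

lemma zf_set_iff_meets_forts:
  "zf_set V E B \<longleftrightarrow> B \<subseteq> V \<and> (\<forall>F. fort V E F \<longrightarrow> F \<inter> B \<noteq> {})"
proof
  assume zf: "zf_set V E B"
  have "F \<inter> B \<noteq> {}" if F: "fort V E F" for F
  proof
    assume "F \<inter> B = {}"
    then have "zf_closure V E B \<inter> F = {}" by (rule zf_closure_disjoint_fort[OF F])
    then have "V \<inter> F = {}" using zf unfolding zf_set_def by simp
    moreover have "F \<noteq> {}" "F \<subseteq> V" using F unfolding fort_def by simp_all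
    ultimately show False by blast
  qed
  then show "B \<subseteq> V \<and> (\<forall>F. fort V E F \<longrightarrow> F \<inter> B \<noteq> {})" using zf unfolding zf_set_def by blast
next
  assume B: "B \<subseteq> V \<and> (\<forall>F. fort V E F \<longrightarrow> F \<inter> B \<noteq> {})"
  have "zf_closure V E B = V"
  proof (rule ccontr)
    assume "zf_closure V E B \<noteq> V"
    then have "fort V E (V - zf_closure V E B)" by (rule fort_compl_zf_closure)
    then have "(V - zf_closure V E B) \<inter> B \<noteq> {}" using B by blast
    moreover have "B \<subseteq> zf_closure V E B" using B by (auto intro: zf_closure.init)
    ultimately show False by blast
  qed
  then show "zf_set V E B" using B unfolding zf_set_def by blast
qed

lemma card_doubleton_Int_eq_1_iff:
  "a \<noteq> b \<Longrightarrow> card ({a, b} \<inter> F) = 1 \<longleftrightarrow> (a \<in> F) \<noteq> (b \<in> F)"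
  by (cases "a \<in> F"; cases "b \<in> F") (auto simp: Int_insert_left)

lemma ZIr_set_doubleton:
  assumes "fort V E F1" "fort V E F2" "F1 \<inter> F2 = {}" "x \<in> F1" "y \<in> F2"
  shows "ZIr_set V E {x, y}"
  unfolding ZIr_set_def
proof (intro conjI ballI)
  show "{x, y} \<subseteq> V" using assms unfolding fort_def by blast
  have "{x, y} \<inter> F1 = {x}" "{x, y} \<inter> F2 = {y}" using assms(3-5) by blast+
  moreover fix z assume "z \<in> {x, y}"
  ultimately show "\<exists>F. fort V E F \<and> {x, y} \<inter> F = {z}"
    using assms(1,2) by blast
qed

lemma minimal_zf_setI_card:
  assumes "finite V" "zf_set V E B" "\<And>B'. zf_set V E B' \<Longrightarrow> card B \<le> card B'"
  shows "minimal_zf_set V E B"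
  unfolding minimal_zf_set_def
proof (intro conjI allI impI notI)
  show "zf_set V E B" by fact
  fix B' assume "B' \<subset> B" "zf_set V E B'"
  moreover have "finite B" using assms(1,2) unfolding zf_set_def by (blast intro: finite_subset)
  ultimately have "card B' < card B" by (simp add: psubset_card_mono)
  then show False using assms(3)[OF \<open>zf_set V E B'\<close>] by linarith
qed

lemma maximal_ZIr_setI_card:
  assumes "finite V" "ZIr_set V E S" "\<And>S'. ZIr_set V E S' \<Longrightarrow> card S' \<le> card S"
  shows "maximal_ZIr_set V E S"
  unfolding maximal_ZIr_set_def
proof (intro conjI allI impI notI)
  show "ZIr_set V E S" by fact
  fix S' assume "S \<subset> S'" "S' \<subseteq> V" "ZIr_set V E S'"
  moreover have "finite S'" using \<open>S' \<subseteq> V\<close> assms(1) by (rule finite_subset)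
  ultimately have "card S < card S'" by (simp add: psubset_card_mono)
  then show False using assms(3)[OF \<open>ZIr_set V E S'\<close>] by linarith
qed

text \<open>If every vertex lies in one of two disjoint forts, a set with at most one vertex
  extends to a ZIr-set \<open>{x, y}\<close>.\<close>
lemma card_maximal_ZIr_set_ge_2:
  assumes fin: "finite V" and "V \<noteq> {}"
    and two_forts: "\<And>x. x \<in> V \<Longrightarrow> \<exists>F1 F2. fort V E F1 \<and> fort V E F2 \<and> F1 \<inter> F2 = {} \<and> x \<in> F1"
    and S: "maximal_ZIr_set V E S"
  shows "2 \<le> card S"
proof (rule ccontr)
  assume "\<not> 2 \<le> card S"
  moreover have SV: "S \<subseteq> V" using S unfolding maximal_ZIr_set_def ZIr_set_def by blast
  ultimately obtain x where x: "x \<in> V" "S \<subseteq> {x}"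
  proof (cases "S = {}")
    case True
    obtain x where "x \<in> V" using \<open>V \<noteq> {}\<close> by blast
    then show ?thesis using that True by blast
  next
    case False
    then obtain x where "x \<in> S" by blast
    moreover have "card S \<le> Suc 0" using \<open>\<not> 2 \<le> card S\<close> by simp
    ultimately have "S \<subseteq> {x}" using card_le_Suc0_iff_eq finite_subset[OF SV fin] by blast
    then show ?thesis using that SV \<open>x \<in> S\<close> by blast
  qed
  obtain F1 F2 where F: "fort V E F1" "fort V E F2" "F1 \<inter> F2 = {}" "x \<in> F1"
    using two_forts[OF x(1)] by blast
  obtain y where y: "y \<in> F2" using F(2) unfolding fort_def by blast
  have "x \<noteq> y" using F(3,4) y by blast
  have "ZIr_set V E {x, y}" using ZIr_set_doubleton[OF F y] .
  moreover have "S \<subset> {x, y}" using x(2) \<open>x \<noteq> y\<close> by blast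
  moreover have "{x, y} \<subseteq> V" using \<open>ZIr_set V E {x, y}\<close> unfolding ZIr_set_def by blast
  ultimately show False using S unfolding maximal_ZIr_set_def by blast
qed

lemma Z_eqI:
  assumes "finite V" "zf_set V E B" "card B = k" "\<And>B'. zf_set V E B' \<Longrightarrow> k \<le> card B'"
  shows "Z V E = k"
  unfolding Z_def
proof (rule Min_eqI)
  have "{B. zf_set V E B} \<subseteq> Pow V" unfolding zf_set_def by blast
  then show "finite (card ` {B. zf_set V E B})" using assms(1) by (simp add: finite_subset)
qed (use assms in auto)

lemma Zbar_eqI:
  assumes "finite V" "minimal_zf_set V E B" "card B = k" "\<And>B'. minimal_zf_set V E B' \<Longrightarrow> card B' \<le> k"
  shows "Zbar V E = k"
  unfolding Zbar_def
proof (rule Max_eqI)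
  have "{B. minimal_zf_set V E B} \<subseteq> Pow V" unfolding minimal_zf_set_def zf_set_def by blast
  then show "finite (card ` {B. minimal_zf_set V E B})" using assms(1) by (simp add: finite_subset)
qed (use assms in auto)

lemma zir_eqI:
  assumes "finite V" "maximal_ZIr_set V E S" "card S = k" "\<And>S'. maximal_ZIr_set V E S' \<Longrightarrow> k \<le> card S'"
  shows "zir V E = k"
  unfolding zir_def
proof (rule Min_eqI)
  have "{S. maximal_ZIr_set V E S} \<subseteq> Pow V" unfolding maximal_ZIr_set_def ZIr_set_def by blast
  then show "finite (card ` {S. maximal_ZIr_set V E S})" using assms(1) by (simp add: finite_subset)
qed (use assms in auto)

lemma ZIR_eqI:
  assumes "finite V" "ZIr_set V E S" "card S = k" "\<And>S'. ZIr_set V E S' \<Longrightarrow> card S' \<le> k"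
  shows "ZIR V E = k"
  unfolding ZIR_def
proof (rule Max_eqI)
  have "{S. maximal_ZIr_set V E S} \<subseteq> Pow V" unfolding maximal_ZIr_set_def ZIr_set_def by blast
  then show "finite (card ` {S. maximal_ZIr_set V E S})" using assms(1) by (simp add: finite_subset)
  show "k \<in> card ` {S. maximal_ZIr_set V E S}"
    using assms maximal_ZIr_setI_card[of V E S] by force
  show "\<And>y. y \<in> card ` {S. maximal_ZIr_set V E S} \<Longrightarrow> y \<le> k"
    using assms(4) unfolding maximal_ZIr_set_def by blast
qed

lemma card_no_consecutive_le:
  "T \<subseteq> {a..<a + 2 * m} \<Longrightarrow> (\<forall>k\<in>T. Suc k \<notin> T) \<Longrightarrow> card T \<le> m"
proof (induction m arbitrary: a T)
  case 0
  then show ?case by simp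
next
  case (Suc m)
  let ?T1 = "T \<inter> {a, Suc a}" and ?T2 = "T \<inter> {a + 2..<(a + 2) + 2 * m}"
  have "card T \<le> card (?T1 \<union> ?T2)" using Suc.prems(1) by (intro card_mono) auto
  also have "\<dots> \<le> card ?T1 + card ?T2" by (rule card_Un_le)
  also have "card ?T2 \<le> m" by (rule Suc.IH) (use Suc.prems(2) in auto)
  also have "card ?T1 \<le> 1"
  proof -
    have "?T1 \<subseteq> {a} \<or> ?T1 \<subseteq> {Suc a}" using Suc.prems(2) by blast
    then show ?thesis using card_mono[of "{a}" ?T1] card_mono[of "{Suc a}" ?T1] by auto
  qed
  finally show ?case by simp
qed

section \<open>Forts of \<open>H(r,s)\<close>\<close>

locale H_graph =
  fixes r s :: nat
  assumes r_ge_2: "2 \<le> r" and s_ge_3: "3 \<le> s"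
begin

abbreviation "HV \<equiv> H_V r s"
abbreviation "HE \<equiv> H_E r s"
abbreviation "N \<equiv> nbhd HV HE"
abbreviation "Ws \<equiv> W ` {1..r}"

lemma finite_HV: "finite HV"
  by (simp add: H_V_def)

lemma in_HV: "U \<in> HV" "i \<in> {1..r} \<Longrightarrow> W i \<in> HV" "j \<in> {1..s} \<Longrightarrow> Y j \<in> HV"
  by (auto simp: H_V_def)

lemma HV_cases [consumes 1, case_names U W Y]:
  assumes "v \<in> HV"
  obtains "v = U" | i where "i \<in> {1..r}" "v = W i" | j where "j \<in> {1..s}" "v = Y j"
  using assms by (auto simp: H_V_def)

lemma card_Ws: "card Ws = r"
  by (simp add: card_image inj_on_def)

lemma card_W_from_2: "card (W ` {2..r}) = r - 1"
  by (simp add: card_image inj_on_def)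

lemma nbhd_U: "N U = Ws"
  unfolding nbhd_def H_V_def H_E_def using s_ge_3 by (auto simp: doubleton_eq_iff)

lemma nbhd_W: "i \<in> {1..r} \<Longrightarrow> N (W i) = {U, Y s}"
  unfolding nbhd_def H_V_def H_E_def using s_ge_3 by (auto simp: doubleton_eq_iff)

lemma nbhd_Y1: "N (Y 1) = {Y 2}"
  unfolding nbhd_def H_V_def H_E_def using s_ge_3 by (auto simp: doubleton_eq_iff)

lemma nbhd_Y_inner:
  assumes "1 < j" "j < s"
  shows "N (Y j) = {Y (j - 1), Y (Suc j)}"
proof -
  obtain k where "j = Suc k" "1 \<le> k" using assms by (cases j) auto
  then show ?thesis unfolding nbhd_def H_V_def H_E_def using s_ge_3 assms
    by (auto simp: doubleton_eq_iff)
qed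

lemma nbhd_Ys: "N (Y s) = Ws \<union> {Y (s - 1)}"
  unfolding nbhd_def H_V_def H_E_def using s_ge_3 by (auto simp: doubleton_eq_iff)

lemma W_in_nbhd: "i \<in> {1..r} \<Longrightarrow> W i \<in> N v \<longleftrightarrow> v = U \<or> v = Y s"
  unfolding nbhd_def H_V_def H_E_def by (auto simp: doubleton_eq_iff)

lemma U_in_nbhd: "U \<in> N v \<longleftrightarrow> v \<in> Ws"
  unfolding nbhd_def H_V_def H_E_def by (auto simp: doubleton_eq_iff)

lemma fort_W_notin: "fort HV HE F \<Longrightarrow> i \<in> {1..r} \<Longrightarrow> W i \<notin> F \<Longrightarrow> U \<in> F \<longleftrightarrow> Y s \<in> F"
  using fort_nbhd_Int_ne_1[of HV HE F "W i"] in_HV nbhd_W card_doubleton_Int_eq_1_iff[of U "Y s" F] by auto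

lemma fort_Y1_notin: "fort HV HE F \<Longrightarrow> Y 1 \<notin> F \<Longrightarrow> Y 2 \<notin> F"
  using fort_nbhd_Int_ne_1[of HV HE F "Y 1"] in_HV(3)[of 1] nbhd_Y1 s_ge_3
  by (auto simp: Int_insert_left split: if_splits)

lemma fort_Y_inner_notin:
  "fort HV HE F \<Longrightarrow> 1 < j \<Longrightarrow> j < s \<Longrightarrow> Y j \<notin> F \<Longrightarrow> Y (j - 1) \<in> F \<longleftrightarrow> Y (Suc j) \<in> F"
  using fort_nbhd_Int_ne_1[of HV HE F "Y j"] in_HV(3)[of j] nbhd_Y_inner[of j]
    card_doubleton_Int_eq_1_iff[of "Y (j - 1)" "Y (Suc j)" F]
  by auto

lemma fort_U_notin: "fort HV HE F \<Longrightarrow> U \<notin> F \<Longrightarrow> card (Ws \<inter> F) \<noteq> 1"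
  using fort_nbhd_Int_ne_1[of HV HE F U, OF _ in_HV(1)] unfolding nbhd_U by blast

lemma fort_Ys_notin: "fort HV HE F \<Longrightarrow> Y s \<notin> F \<Longrightarrow> card ((Ws \<union> {Y (s - 1)}) \<inter> F) \<noteq> 1"
  using fort_nbhd_Int_ne_1[of HV HE F "Y s", OF _ in_HV(3)[of s]] s_ge_3 unfolding nbhd_Ys by simp

text \<open>Every inner path vertex outside a fort has both or neither neighbour in it, so a gap of
  two consecutive path vertices spreads along the whole path.\<close>
lemma fort_gap_spreads:
  assumes F: "fort HV HE F" and j: "1 \<le> j" "j < s" and gap: "Y j \<notin> F" "Y (Suc j) \<notin> F"
    and k: "k \<in> {1..s}"
  shows "Y k \<notin> F"
proof -
  have up: "Y k \<notin> F \<and> Y (Suc k) \<notin> F" if "j \<le> k" "k < s" for k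
    using that(1)
  proof (induction k rule: dec_induct)
    case base
    then show ?case using gap by simp
  next
    case (step n)
    then have "Y (Suc (Suc n)) \<notin> F"
      using fort_Y_inner_notin[OF F, of "Suc n"] j that(2) by simp
    then show ?case using step.IH by simp
  qed
  have down: "Y k \<notin> F \<and> Y (Suc k) \<notin> F" if "k \<le> j" "1 \<le> k" for k
    using that(1)
  proof (induction k rule: inc_induct)
    case base
    then show ?case using gap by simp
  next
    case (step n)
    then have "Y n \<notin> F"
      using fort_Y_inner_notin[OF F, of "Suc n"] j that(2) by simp
    then show ?case using step.IH by simp
  qed
  consider "k \<le> j" | "j \<le> k" "k < s" | "k = s" using k by (cases "k \<le> j"; cases "k < s") auto
  then show ?thesis
  proof cases
    case 3
    then show ?thesis using up[of "s - 1"] j by simp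
  qed (use up down k in auto)
qed

lemma fort_meets_path:
  assumes F: "fort HV HE F" and k: "k \<in> {1..s}" "Y k \<in> F"
  shows "Y 1 \<in> F" "1 \<le> j \<Longrightarrow> j < s \<Longrightarrow> Y j \<in> F \<or> Y (Suc j) \<in> F"
proof -
  show "Y 1 \<in> F"
  proof (rule ccontr)
    assume "Y 1 \<notin> F"
    moreover have "Y (Suc 1) \<notin> F" using fort_Y1_notin[OF F \<open>Y 1 \<notin> F\<close>] by (simp add: numeral_2_eq_2)
    ultimately have "Y k \<notin> F" using fort_gap_spreads[OF F, of 1] k(1) s_ge_3 by simp
    then show False using k(2) by simp
  qed
  show "Y j \<in> F \<or> Y (Suc j) \<in> F" if "1 \<le> j" "j < s"
    using fort_gap_spreads[OF F that _ _ k(1)] k(2) by blast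
qed

lemma fort_W_pair:
  assumes "i \<in> {1..r}" "j \<in> {1..r}" "i \<noteq> j"
  shows "fort HV HE {W i, W j}"
  unfolding fort_def
proof (intro conjI ballI)
  show "{W i, W j} \<noteq> {}" by simp
  show "{W i, W j} \<subseteq> HV" using assms in_HV by auto
  fix v assume "v \<in> HV - {W i, W j}"
  have "N v \<inter> {W i, W j} = (if v = U \<or> v = Y s then {W i, W j} else {})"
    using W_in_nbhd[OF assms(1), of v] W_in_nbhd[OF assms(2), of v] by auto
  then show "card (N v \<inter> {W i, W j}) \<noteq> 1" using assms by auto
qed

text \<open>Index sets \<open>P\<close> of path vertices such that \<open>{U} \<union> Y ` P\<close> is a fort.\<close>
definition path_cover :: "nat set \<Rightarrow> bool" where
  "path_cover P \<longleftrightarrow> P \<subseteq> {1..s} \<and> 1 \<in> P \<and> s \<in> P \<and> (\<forall>j. 1 \<le> j \<longrightarrow> j < s \<longrightarrow> j \<in> P \<or> Suc j \<in> P)"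

lemma fort_path_cover:
  assumes A: "A \<subseteq> Ws" and P: "path_cover P"
  shows "fort HV HE (A \<union> {U} \<union> Y ` P)"
  unfolding fort_def
proof (intro conjI ballI)
  let ?F = "A \<union> {U} \<union> Y ` P"
  have P_sub: "P \<subseteq> {1..s}" and "1 \<in> P" "s \<in> P"
    and P_gap: "\<And>j. 1 \<le> j \<Longrightarrow> j < s \<Longrightarrow> j \<in> P \<or> Suc j \<in> P"
    using P unfolding path_cover_def by blast+
  show "?F \<noteq> {}" by blast
  show "?F \<subseteq> HV" using A P_sub in_HV by blast
  fix v assume v: "v \<in> HV - ?F"
  then have "v \<in> HV" by blast
  then show "card (N v \<inter> ?F) \<noteq> 1"
  proof (cases rule: HV_cases)
    case U
    then show ?thesis using v by blast
  next
    case (W i)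
    then have "N v \<inter> ?F = {U, Y s}" using nbhd_W \<open>s \<in> P\<close> by auto
    then show ?thesis by simp
  next
    case (Y t)
    then have "t \<notin> P" using v by blast
    then have t: "1 < t" "t < s" using Y(1) \<open>1 \<in> P\<close> \<open>s \<in> P\<close> by (auto simp: le_less)
    have "t - 1 \<in> P" using P_gap[of "t - 1"] t \<open>t \<notin> P\<close> by simp
    moreover have "Suc t \<in> P" using P_gap[of t] t \<open>t \<notin> P\<close> by simp
    ultimately have "N v \<inter> ?F = {Y (t - 1), Y (Suc t)}"
      using nbhd_Y_inner[OF t] Y(2) by auto
    then show ?thesis using t by simp
  qed
qed

text \<open>Conversely, a fort containing at most one \<open>W i\<close> contains \<open>U\<close>: otherwise the
  condition at \<open>U\<close> excludes every \<open>W i\<close>, then \<open>Y s\<close> and \<open>Y (s - 1)\<close>, and so the whole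
  path. Missing some \<open>W i\<close>, it then contains \<open>Y s\<close> and covers the path.\<close>
lemma fort_cases [consumes 1, case_names W_pair path]:
  assumes F: "fort HV HE F"
  obtains i j where "i \<in> {1..r}" "j \<in> {1..r}" "i \<noteq> j" "W i \<in> F" "W j \<in> F"
    | "U \<in> F" "path_cover {j \<in> {1..s}. Y j \<in> F}"
proof (cases "\<exists>i\<in>{1..r}. \<exists>j\<in>{1..r}. i \<noteq> j \<and> W i \<in> F \<and> W j \<in> F")
  case True
  then show ?thesis using that(1) by blast
next
  case False
  then have one_W: "\<And>i j. i \<in> {1..r} \<Longrightarrow> j \<in> {1..r} \<Longrightarrow> W i \<in> F \<Longrightarrow> W j \<in> F \<Longrightarrow> i = j"
    by blast
  obtain i0 where i0: "i0 \<in> {1..r}" "W i0 \<notin> F"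
  proof -
    have "W 1 \<notin> F \<or> W 2 \<notin> F" using one_W[of 1 2] r_ge_2 by auto
    then show thesis using that[of 1] that[of 2] r_ge_2 by auto
  qed
  have "U \<in> F"
  proof (rule ccontr)
    assume "U \<notin> F"
    have no_W: "Ws \<inter> F = {}"
    proof (rule ccontr)
      assume "Ws \<inter> F \<noteq> {}"
      then obtain i where i: "i \<in> {1..r}" "W i \<in> F" by blast
      then have "Ws \<inter> F = {W i}" using one_W by blast
      then show False using fort_U_notin[OF F \<open>U \<notin> F\<close>] by simp
    qed
    have "Y s \<notin> F" using fort_W_notin[OF F i0] \<open>U \<notin> F\<close> by blast
    moreover have "Y (s - 1) \<notin> F"
      using fort_Ys_notin[OF F \<open>Y s \<notin> F\<close>] no_W by (cases "Y (s - 1) \<in> F") auto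
    ultimately have no_Y: "Y k \<notin> F" if "k \<in> {1..s}" for k
      using fort_gap_spreads[OF F, of "s - 1"] s_ge_3 that by simp
    obtain x where "x \<in> F" "x \<in> HV" using F unfolding fort_def by blast
    from \<open>x \<in> HV\<close> show False
      by (cases rule: HV_cases) (use \<open>x \<in> F\<close> no_W no_Y \<open>U \<notin> F\<close> in blast)+
  qed
  moreover have "Y s \<in> F" using fort_W_notin[OF F i0] \<open>U \<in> F\<close> by blast
  moreover have "path_cover {j \<in> {1..s}. Y j \<in> F}"
    unfolding path_cover_def using fort_meets_path[OF F _ \<open>Y s \<in> F\<close>] \<open>Y s \<in> F\<close> s_ge_3 by auto
  ultimately show ?thesis using that(2) by blast
qed

section \<open>Zero forcing sets of \<open>H(r,s)\<close>\<close>

definition meets_W_pairs :: "hvert set \<Rightarrow> bool" where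
  "meets_W_pairs B \<longleftrightarrow> (\<forall>i\<in>{1..r}. \<forall>j\<in>{1..r}. i \<noteq> j \<longrightarrow> W i \<in> B \<or> W j \<in> B)"

definition meets_path_forts :: "hvert set \<Rightarrow> bool" where
  "meets_path_forts B \<longleftrightarrow>
     U \<in> B \<or> Y 1 \<in> B \<or> Y s \<in> B \<or> (\<exists>j. 1 \<le> j \<and> j < s \<and> Y j \<in> B \<and> Y (Suc j) \<in> B)"

lemma meets_W_pairs_mono: "meets_W_pairs B \<Longrightarrow> B \<subseteq> B' \<Longrightarrow> meets_W_pairs B'"
  unfolding meets_W_pairs_def by blast

lemma meets_path_forts_mono: "meets_path_forts B \<Longrightarrow> B \<subseteq> B' \<Longrightarrow> meets_path_forts B'"
  unfolding meets_path_forts_def by blast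

lemma zf_set_iff: "zf_set HV HE B \<longleftrightarrow> B \<subseteq> HV \<and> meets_W_pairs B \<and> meets_path_forts B"
proof
  assume zf: "zf_set HV HE B"
  then have meets: "F \<inter> B \<noteq> {}" if "fort HV HE F" for F
    using that unfolding zf_set_iff_meets_forts by blast
  have "meets_W_pairs B"
    unfolding meets_W_pairs_def using meets[OF fort_W_pair] by blast
  moreover have "meets_path_forts B"
  proof (rule ccontr)
    assume no_meet: "\<not> meets_path_forts B"
    then have "path_cover {j \<in> {1..s}. Y j \<notin> B}"
      unfolding meets_path_forts_def path_cover_def using s_ge_3 by auto
    then have "fort HV HE ({} \<union> {U} \<union> Y ` {j \<in> {1..s}. Y j \<notin> B})"
      by (intro fort_path_cover) simp_all
    then show False using meets no_meet unfolding meets_path_forts_def by blast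
  qed
  ultimately show "B \<subseteq> HV \<and> meets_W_pairs B \<and> meets_path_forts B"
    using zf unfolding zf_set_def by blast
next
  assume B: "B \<subseteq> HV \<and> meets_W_pairs B \<and> meets_path_forts B"
  have "F \<inter> B \<noteq> {}" if F: "fort HV HE F" for F
    using F
  proof (cases rule: fort_cases)
    case W_pair
    then show ?thesis using B unfolding meets_W_pairs_def by blast
  next
    case path
    then show ?thesis using B unfolding meets_path_forts_def path_cover_def by blast
  qed
  then show "zf_set HV HE B" using B unfolding zf_set_iff_meets_forts by blast
qed

lemma card_Ws_diff_le_1:
  assumes "meets_W_pairs B"
  shows "card (Ws - B) \<le> 1"
proof -
  have "\<forall>a\<in>Ws - B. \<forall>b\<in>Ws - B. a = b" using assms unfolding meets_W_pairs_def by blast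
  then show ?thesis using card_le_Suc0_iff_eq[of "Ws - B"] by simp
qed

lemma card_zf_set_ge:
  assumes "zf_set HV HE B"
  shows "r \<le> card B"
proof -
  have B: "B \<subseteq> HV" "meets_W_pairs B" "meets_path_forts B" using assms zf_set_iff by blast+
  have "finite B" using B(1) finite_HV by (rule finite_subset)
  obtain x where "x \<in> B" "x \<notin> Ws" using B(3) unfolding meets_path_forts_def by blast
  have "r = card (Ws \<inter> B) + card (Ws - B)" using card_Int_Diff[of Ws B] card_Ws by simp
  also have "\<dots> \<le> card (Ws \<inter> B) + 1" using card_Ws_diff_le_1[OF B(2)] by simp
  also have "\<dots> = card (insert x (Ws \<inter> B))" using \<open>x \<notin> Ws\<close> by simp
  also have "\<dots> \<le> card B" using \<open>x \<in> B\<close> \<open>finite B\<close> by (intro card_mono) auto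
  finally show ?thesis .
qed

definition B_Z :: "hvert set" where
  "B_Z = insert (Y 1) (W ` {2..r})"

lemma meets_W_pairs_W_from_2: "meets_W_pairs (W ` {2..r})"
  unfolding meets_W_pairs_def by force

lemma zf_set_B_Z: "zf_set HV HE B_Z"
proof -
  have "meets_W_pairs B_Z" by (rule meets_W_pairs_mono[OF meets_W_pairs_W_from_2]) (auto simp: B_Z_def)
  moreover have "meets_path_forts B_Z" by (simp add: meets_path_forts_def B_Z_def)
  moreover have "B_Z \<subseteq> HV" using in_HV s_ge_3 by (auto simp: B_Z_def)
  ultimately show ?thesis by (simp add: zf_set_iff)
qed

lemma card_B_Z: "card B_Z = r"
  unfolding B_Z_def using card_W_from_2 r_ge_2 by (simp add: image_iff)

lemma minimal_zf_set_B_Z: "minimal_zf_set HV HE B_Z"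
  by (rule minimal_zf_setI_card[OF finite_HV zf_set_B_Z]) (simp add: card_B_Z card_zf_set_ge)

lemma Z_H: "Z HV HE = r"
  by (rule Z_eqI[OF finite_HV zf_set_B_Z card_B_Z card_zf_set_ge])

lemma meets_W_pairs_small_subset:
  assumes "meets_W_pairs B"
  obtains B' where "B' \<subseteq> B" "card B' \<le> r - 1" "meets_W_pairs B'"
proof (cases "Ws \<subseteq> B")
  case True
  then show ?thesis
    using that[of "W ` {2..r}"] card_W_from_2 meets_W_pairs_W_from_2 by force
next
  case False
  then have "card (Ws \<inter> B) < card Ws" by (intro psubset_card_mono) auto
  moreover have "meets_W_pairs (Ws \<inter> B)" using assms unfolding meets_W_pairs_def by blast
  ultimately show ?thesis using that[of "Ws \<inter> B"] card_Ws by simp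
qed

lemma meets_path_forts_small_subset:
  assumes "meets_path_forts B"
  obtains B' where "B' \<subseteq> B" "card B' \<le> (if s = 3 then 1 else 2)" "meets_path_forts B'"
proof -
  consider "U \<in> B" | "Y 1 \<in> B" | "Y s \<in> B"
    | j where "Y 1 \<notin> B" "Y s \<notin> B" "1 \<le> j" "j < s" "Y j \<in> B" "Y (Suc j) \<in> B"
    using assms unfolding meets_path_forts_def by blast
  then show thesis
  proof cases
    case 1
    then show ?thesis using that[of "{U}"] unfolding meets_path_forts_def by simp
  next
    case 2
    then show ?thesis using that[of "{Y 1}"] unfolding meets_path_forts_def by simp
  next
    case 3
    then show ?thesis using that[of "{Y s}"] unfolding meets_path_forts_def by simp
  next
    case (4 j)
    \<comment> \<open>for \<open>s = 3\<close> every pair of consecutive path vertices contains \<open>Y 1\<close> or \<open>Y s\<close>\<close>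
    then have "s \<noteq> 3" by (auto simp: numeral_3_eq_3 less_Suc_eq)
    moreover have "meets_path_forts {Y j, Y (Suc j)}" unfolding meets_path_forts_def using 4 by blast
    ultimately show ?thesis using that[of "{Y j, Y (Suc j)}"] 4 by simp
  qed
qed

lemma card_minimal_zf_set_le:
  assumes "minimal_zf_set HV HE B"
  shows "card B \<le> r + 1" "s = 3 \<Longrightarrow> card B \<le> r"
proof -
  have B: "B \<subseteq> HV" "meets_W_pairs B" "meets_path_forts B"
    using assms unfolding minimal_zf_set_def zf_set_iff by blast+
  obtain BW where BW: "BW \<subseteq> B" "card BW \<le> r - 1" "meets_W_pairs BW"
    using meets_W_pairs_small_subset[OF B(2)] .
  obtain BY where BY: "BY \<subseteq> B" "card BY \<le> (if s = 3 then 1 else 2)" "meets_path_forts BY"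
    using meets_path_forts_small_subset[OF B(3)] .
  have "meets_W_pairs (BW \<union> BY)" by (rule meets_W_pairs_mono[OF BW(3)]) blast
  moreover have "meets_path_forts (BW \<union> BY)" by (rule meets_path_forts_mono[OF BY(3)]) blast
  ultimately have "zf_set HV HE (BW \<union> BY)" unfolding zf_set_iff using B(1) BW(1) BY(1) by blast
  moreover have "\<not> BW \<union> BY \<subset> B" if "zf_set HV HE (BW \<union> BY)"
    using assms that unfolding minimal_zf_set_def by blast
  ultimately have "BW \<union> BY = B" using BW(1) BY(1) by blast
  then have "card B \<le> card BW + card BY" by (metis card_Un_le)
  then show "card B \<le> r + 1" "s = 3 \<Longrightarrow> card B \<le> r"
    using BW(2) BY(2) r_ge_2 by (auto split: if_splits)
qed

definition B_Zbar :: "hvert set" where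
  "B_Zbar = {Y 2, Y 3} \<union> W ` {2..r}"

lemma minimal_zf_set_B_Zbar:
  assumes "5 \<le> s"
  shows "minimal_zf_set HV HE B_Zbar"
  unfolding minimal_zf_set_def
proof (intro conjI allI impI notI)
  have "meets_path_forts B_Zbar"
    unfolding meets_path_forts_def B_Zbar_def using assms by (intro disjI2 exI[of _ 2]) simp
  moreover have "meets_W_pairs B_Zbar"
    by (rule meets_W_pairs_mono[OF meets_W_pairs_W_from_2]) (auto simp: B_Zbar_def)
  moreover have "B_Zbar \<subseteq> HV" using in_HV assms by (auto simp: B_Zbar_def)
  ultimately show "zf_set HV HE B_Zbar" by (simp add: zf_set_iff)
  fix B' assume "B' \<subset> B_Zbar" "zf_set HV HE B'"
  then have B': "meets_W_pairs B'" "meets_path_forts B'" by (simp_all add: zf_set_iff)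
  have sub: "B' \<subseteq> {Y 2, Y 3} \<union> W ` {2..r}" using \<open>B' \<subset> B_Zbar\<close> unfolding B_Zbar_def by blast
  then have "U \<notin> B'" "Y 1 \<notin> B'" "Y s \<notin> B'" "W 1 \<notin> B'" using assms by auto
  then obtain j where j: "1 \<le> j" "j < s" "Y j \<in> B'" "Y (Suc j) \<in> B'"
    using B'(2) unfolding meets_path_forts_def by blast
  then have "j \<in> {2, 3}" "Suc j \<in> {2, 3}" using sub by auto
  then have "Y 2 \<in> B'" "Y 3 \<in> B'" using j by auto
  moreover obtain x where "x \<in> B_Zbar" "x \<notin> B'" using \<open>B' \<subset> B_Zbar\<close> by blast
  ultimately obtain i where i: "i \<in> {2..r}" "W i \<notin> B'" unfolding B_Zbar_def by auto
  then have "i \<in> {1..r}" "(1::nat) \<in> {1..r}" "i \<noteq> 1" using r_ge_2 by auto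
  then show False using B'(1) i(2) \<open>W 1 \<notin> B'\<close> unfolding meets_W_pairs_def by blast
qed

lemma card_B_Zbar: "card B_Zbar = r + 1"
  unfolding B_Zbar_def using card_W_from_2 r_ge_2 by (simp add: image_iff)

lemma Zbar_H_ge_5: "5 \<le> s \<Longrightarrow> Zbar HV HE = r + 1"
  by (rule Zbar_eqI[OF finite_HV minimal_zf_set_B_Zbar card_B_Zbar card_minimal_zf_set_le(1)])

lemma Zbar_H_3: "s = 3 \<Longrightarrow> Zbar HV HE = r"
  by (rule Zbar_eqI[OF finite_HV minimal_zf_set_B_Z card_B_Z card_minimal_zf_set_le(2)])

section \<open>ZIr-sets of \<open>H(r,s)\<close>\<close>

lemma fort_U_Ws: "fort HV HE (insert U Ws)"
  unfolding fort_def
proof (intro conjI ballI)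
  show "insert U Ws \<noteq> {}" "insert U Ws \<subseteq> HV" using in_HV by auto
  fix v assume v: "v \<in> HV - insert U Ws"
  then obtain t where t: "t \<in> {1..s}" "v = Y t" by (auto elim: HV_cases)
  then have "U \<notin> N v" using U_in_nbhd by auto
  then have "N v \<inter> insert U Ws = (if t = s then Ws else {})" using W_in_nbhd t by auto
  then show "card (N v \<inter> insert U Ws) \<noteq> 1" using card_Ws r_ge_2 by simp
qed

lemma fort_HV_minus_U: "fort HV HE (HV - {U})"
  unfolding fort_def
proof (intro conjI ballI)
  show "HV - {U} \<noteq> {}" using in_HV(2)[of 1] r_ge_2 by auto
  show "HV - {U} \<subseteq> HV" by blast
  fix v assume "v \<in> HV - (HV - {U})"
  then have "N v \<inter> (HV - {U}) = Ws" using nbhd_U in_HV by auto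
  then show "card (N v \<inter> (HV - {U})) \<noteq> 1" using card_Ws r_ge_2 by simp
qed

lemma fort_Y_notin_if_Y1_notin: "fort HV HE F \<Longrightarrow> Y 1 \<notin> F \<Longrightarrow> k \<in> {1..s} \<Longrightarrow> Y k \<notin> F"
  using fort_meets_path(1) by blast

lemma fort_Ws_subset:
  assumes F: "fort HV HE F" and "U \<in> F" "Y 1 \<notin> F"
  shows "Ws \<subseteq> F"
proof
  fix w assume "w \<in> Ws"
  then obtain i where i: "i \<in> {1..r}" "w = W i" by blast
  have "Y s \<notin> F" using fort_Y_notin_if_Y1_notin[OF F \<open>Y 1 \<notin> F\<close>, of s] s_ge_3 by simp
  then show "w \<in> F" using fort_W_notin[OF F i(1)] \<open>U \<in> F\<close> i(2) by blast
qed

lemma maximal_ZIr_set_U_Y1: "maximal_ZIr_set HV HE {U, Y 1}"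
  unfolding maximal_ZIr_set_def
proof (intro conjI allI impI notI)
  have Y1: "Y 1 \<in> HV" using in_HV(3)[of 1] s_ge_3 by simp
  show "ZIr_set HV HE {U, Y 1}"
    unfolding ZIr_set_def
  proof (intro conjI ballI)
    show "{U, Y 1} \<subseteq> HV" using in_HV(1) Y1 by blast
    have "{U, Y 1} \<inter> insert U Ws = {U}" "{U, Y 1} \<inter> (HV - {U}) = {Y 1}" using Y1 by auto
    then show "\<exists>F. fort HV HE F \<and> {U, Y 1} \<inter> F = {z}" if "z \<in> {U, Y 1}" for z
      using that fort_U_Ws fort_HV_minus_U by blast
  qed
  fix S' assume S': "{U, Y 1} \<subset> S'" "S' \<subseteq> HV" "ZIr_set HV HE S'"
  then have private_fort: "\<exists>F. fort HV HE F \<and> S' \<inter> F = {x}" if "x \<in> S'" for x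
    using that unfolding ZIr_set_def by blast
  obtain x where x: "x \<in> S'" "x \<noteq> U" "x \<noteq> Y 1" using S'(1) by blast
  then have "x \<in> HV" using S'(2) by blast
  then show False
  proof (cases rule: HV_cases)
    case U
    then show ?thesis using x by simp
  next
    case (W i)
    obtain F where F: "fort HV HE F" "S' \<inter> F = {U}" using private_fort[of U] S'(1) by blast
    then have "U \<in> F" "Y 1 \<notin> F" using S'(1) by auto
    then have "x \<in> F" using fort_Ws_subset[OF F(1)] W by blast
    then show False using F(2) x by blast
  next
    case (Y j)
    obtain F where F: "fort HV HE F" "S' \<inter> F = {x}" using private_fort[OF x(1)] by blast
    then have "Y 1 \<notin> F" "x \<in> F" using S'(1) x by auto
    then show False using fort_Y_notin_if_Y1_notin[OF F(1)] Y by blast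
  qed
qed

definition odds :: "nat set" where
  "odds = {j \<in> {1..s}. odd j}"

lemma path_cover_odds: "odd s \<Longrightarrow> path_cover odds"
  using s_ge_3 unfolding path_cover_def odds_def by auto

lemma path_cover_insert: "path_cover P \<Longrightarrow> j \<in> {1..s} \<Longrightarrow> path_cover (insert j P)"
  unfolding path_cover_def by blast

lemma two_disjoint_forts:
  assumes "odd s" "x \<in> HV"
  shows "\<exists>F1 F2. fort HV HE F1 \<and> fort HV HE F2 \<and> F1 \<inter> F2 = {} \<and> x \<in> F1"
proof -
  have path_fort: "fort HV HE ({} \<union> {U} \<union> Y ` P)" if "path_cover P" for P
    using fort_path_cover[OF _ that] by blast
  have disj: "({} \<union> {U} \<union> Y ` P) \<inter> {W i, W j} = {}" "{W i, W j} \<inter> ({} \<union> {U} \<union> Y ` P) = {}"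
    for P i j by auto
  have pair_fort: "fort HV HE {W i, W (if i = 1 then 2 else 1)}" if "i \<in> {1..r}" for i
    using fort_W_pair[OF that] that r_ge_2 by auto
  have odds_fort: "fort HV HE ({} \<union> {U} \<union> Y ` odds)"
    using path_fort[OF path_cover_odds[OF assms(1)]] .
  have W12_fort: "fort HV HE {W 1, W 2}" using pair_fort[of 1] r_ge_2 by simp
  from assms(2) show ?thesis
  proof (cases rule: HV_cases)
    case U
    then show ?thesis using odds_fort W12_fort disj(1) by blast
  next
    case (W i)
    then show ?thesis using odds_fort pair_fort[of i] disj(2) by blast
  next
    case (Y j)
    then have "fort HV HE ({} \<union> {U} \<union> Y ` insert j odds)"
      using path_fort path_cover_insert path_cover_odds[OF assms(1)] by blast
    then show ?thesis using W12_fort disj(1) Y by blast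
  qed
qed

lemma zir_H: "odd s \<Longrightarrow> zir HV HE = 2"
  using zir_eqI[OF finite_HV maximal_ZIr_set_U_Y1]
    card_maximal_ZIr_set_ge_2[OF finite_HV _ two_disjoint_forts] in_HV(1)
  by fastforce

lemma card_path_outside_fort_le:
  assumes F: "fort HV HE F" and k: "k \<in> {1..s}" "Y k \<in> F" and m: "s = 2 * m + 1"
  shows "card {j \<in> {1..s}. Y j \<notin> F} \<le> m"
proof (rule card_no_consecutive_le)
  show "{j \<in> {1..s}. Y j \<notin> F} \<subseteq> {2..<2 + 2 * m}"
  proof
    fix j assume "j \<in> {j \<in> {1..s}. Y j \<notin> F}"
    then have "j \<noteq> 1" "1 \<le> j" "j \<le> s" using fort_meets_path(1)[OF F k] by auto
    then show "j \<in> {2..<2 + 2 * m}" using m by simp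
  qed
  show "\<forall>j\<in>{j \<in> {1..s}. Y j \<notin> F}. Suc j \<notin> {j \<in> {1..s}. Y j \<notin> F}"
  proof (intro ballI notI)
    fix j assume "j \<in> {j \<in> {1..s}. Y j \<notin> F}" "Suc j \<in> {j \<in> {1..s}. Y j \<notin> F}"
    then show False using fort_meets_path(2)[OF F k, of j] by simp
  qed
qed

text \<open>The private fort of one path vertex of a ZIr-set meets the path and misses all other
  path vertices of the set.\<close>
lemma card_ZIr_path_le:
  assumes S: "ZIr_set HV HE S" and m: "s = 2 * m + 1"
  shows "card {j \<in> {1..s}. Y j \<in> S} \<le> m + 1"
proof (cases "{j \<in> {1..s}. Y j \<in> S} = {}")
  case True
  then show ?thesis by (simp only: card.empty)
next
  case False
  let ?SY = "{j \<in> {1..s}. Y j \<in> S}"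
  obtain k where k: "k \<in> ?SY" using False by blast
  then obtain F where F: "fort HV HE F" "S \<inter> F = {Y k}" using S unfolding ZIr_set_def by blast
  then have "Y k \<in> F" by blast
  have "?SY - {k} \<subseteq> {j \<in> {1..s}. Y j \<notin> F}" using F(2) by auto
  then have "card (?SY - {k}) \<le> card {j \<in> {1..s}. Y j \<notin> F}" by (intro card_mono) simp_all
  also have "\<dots> \<le> m" using card_path_outside_fort_le[OF F(1) _ \<open>Y k \<in> F\<close> m] k by simp
  finally have "card (?SY - {k}) \<le> m" .
  moreover have "card ?SY = Suc (card (?SY - {k}))" using k by (intro card_Suc_Diff1[symmetric]) simp_all
  ultimately show ?thesis by simp
qed

lemma card_ZIr_path_le_if_fort_through_U:
  assumes F: "fort HV HE F" "U \<in> F" "i \<in> {1..r}" "W i \<notin> F"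
    and S_F: "\<And>j. Y j \<in> S \<Longrightarrow> Y j \<notin> F" and m: "s = 2 * m + 1"
  shows "card {j \<in> {1..s}. Y j \<in> S} \<le> m"
proof -
  have "Y s \<in> F" using fort_W_notin[OF F(1,3,4)] F(2) by blast
  moreover have "s \<in> {1..s}" using s_ge_3 by simp
  ultimately have "card {j \<in> {1..s}. Y j \<notin> F} \<le> m"
    using card_path_outside_fort_le[OF F(1) _ _ m] by blast
  moreover have "{j \<in> {1..s}. Y j \<in> S} \<subseteq> {j \<in> {1..s}. Y j \<notin> F}" using S_F by blast
  then have "card {j \<in> {1..s}. Y j \<in> S} \<le> card {j \<in> {1..s}. Y j \<notin> F}"
    by (intro card_mono) simp_all
  ultimately show ?thesis by linarith
qed

text \<open>If \<open>S\<close> contains all of \<open>Ws\<close>, the private fort of \<open>W 1\<close> misses \<open>W 2\<close>; it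
  cannot miss \<open>U\<close> as well, since then \<open>W 1\<close> would be the only neighbour of \<open>U\<close> in it.\<close>
lemma ZIr_set_all_W:
  assumes S: "ZIr_set HV HE S" and "Ws \<subseteq> S" and m: "s = 2 * m + 1"
  shows "U \<notin> S" "card {j \<in> {1..s}. Y j \<in> S} \<le> m"
proof -
  have W12: "W 1 \<in> Ws" "W 2 \<in> S" "2 \<in> {1..r}" using \<open>Ws \<subseteq> S\<close> r_ge_2 by auto
  obtain F where F: "fort HV HE F" "S \<inter> F = {W 1}" using S W12(1) \<open>Ws \<subseteq> S\<close> unfolding ZIr_set_def by blast
  have "W 2 \<noteq> W 1" by simp
  then have "W 2 \<notin> F" using F(2) W12(2) by blast
  have "U \<in> F"
  proof (rule ccontr)
    assume "U \<notin> F"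
    moreover have "Ws \<inter> F = {W 1}" using F(2) \<open>Ws \<subseteq> S\<close> W12(1) by blast
    ultimately show False using fort_U_notin[OF F(1)] by simp
  qed
  moreover have "U \<noteq> W 1" by simp
  ultimately show "U \<notin> S" using F(2) by blast
  have "Y j \<notin> F" if "Y j \<in> S" for j
  proof -
    have "Y j \<noteq> W 1" by simp
    then show ?thesis using F(2) that by blast
  qed
  then show "card {j \<in> {1..s}. Y j \<in> S} \<le> m"
    by (rule card_ZIr_path_le_if_fort_through_U[OF F(1) \<open>U \<in> F\<close> W12(3) \<open>W 2 \<notin> F\<close> _ m])
qed

lemma ZIr_set_U_and_W:
  assumes S: "ZIr_set HV HE S" and "U \<in> S" "i \<in> {1..r}" "W i \<in> S" and m: "s = 2 * m + 1"
  shows "card {j \<in> {1..s}. Y j \<in> S} \<le> m"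
proof -
  obtain F where F: "fort HV HE F" "S \<inter> F = {U}" using S \<open>U \<in> S\<close> unfolding ZIr_set_def by blast
  have "W i \<noteq> U" "\<And>j. Y j \<noteq> U" by simp_all
  then have "U \<in> F" "W i \<notin> F" "\<And>j. Y j \<in> S \<Longrightarrow> Y j \<notin> F" using F(2) \<open>W i \<in> S\<close> by blast+
  then show ?thesis using card_ZIr_path_le_if_fort_through_U[OF F(1) _ \<open>i \<in> {1..r}\<close> _ _ m] by blast
qed

lemma card_ZIr_set_le:
  assumes S: "ZIr_set HV HE S" and m: "s = 2 * m + 1"
  shows "card S \<le> r + m"
proof -
  define SY where "SY = {j \<in> {1..s}. Y j \<in> S}"
  have "S \<subseteq> (S \<inter> {U}) \<union> (S \<inter> Ws) \<union> Y ` SY"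
    using S unfolding ZIr_set_def SY_def H_V_def by auto
  then have "card S \<le> card ((S \<inter> {U}) \<union> (S \<inter> Ws) \<union> Y ` SY)"
    by (rule card_mono[rotated]) (simp add: SY_def)
  moreover have "card ((S \<inter> {U}) \<union> (S \<inter> Ws) \<union> Y ` SY)
      \<le> card (S \<inter> {U}) + card (S \<inter> Ws) + card (Y ` SY)"
    using card_Un_le[of "S \<inter> {U}" "S \<inter> Ws"] card_Un_le[of "(S \<inter> {U}) \<union> (S \<inter> Ws)" "Y ` SY"]
    by linarith
  moreover have "card (Y ` SY) \<le> card SY" by (rule card_image_le) (simp add: SY_def)
  ultimately have split: "card S \<le> card (S \<inter> {U}) + card (S \<inter> Ws) + card SY" by linarith
  have U_le: "card (S \<inter> {U}) \<le> 1" using card_mono[of "{U}" "S \<inter> {U}"] by simp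
  have Ws_le: "card (S \<inter> Ws) \<le> r" using card_mono[of Ws "S \<inter> Ws"] card_Ws by simp
  have SY_le: "card SY \<le> m + 1" unfolding SY_def by (rule card_ZIr_path_le[OF S m])
  show ?thesis
  proof (cases "Ws \<subseteq> S")
    case True
    then have "card (S \<inter> {U}) = 0" "card SY \<le> m"
      using ZIr_set_all_W[OF S True m] unfolding SY_def by simp_all
    then show ?thesis using split Ws_le by linarith
  next
    case False
    then have "S \<inter> Ws \<subset> Ws" by blast
    then have "card (S \<inter> Ws) < r" using card_Ws psubset_card_mono[of Ws "S \<inter> Ws"] by simp
    show ?thesis
    proof (cases "U \<in> S \<and> S \<inter> Ws \<noteq> {}")
      case True
      then obtain i where "U \<in> S" "i \<in> {1..r}" "W i \<in> S" by blast
      then have "card SY \<le> m" unfolding SY_def by (rule ZIr_set_U_and_W[OF S _ _ _ m])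
      then show ?thesis using split U_le \<open>card (S \<inter> Ws) < r\<close> by linarith
    next
      case False
      then have "card (S \<inter> {U}) + card (S \<inter> Ws) < r"
        using U_le \<open>card (S \<inter> Ws) < r\<close> r_ge_2 by (cases "U \<in> S") auto
      then show ?thesis using split SY_le by linarith
    qed
  qed
qed

definition S_ZIR :: "hvert set" where
  "S_ZIR = Ws \<union> Y ` {j \<in> {1..s}. even j}"

lemma ZIr_set_S_ZIR:
  assumes "odd s"
  shows "ZIr_set HV HE S_ZIR"
  unfolding ZIr_set_def
proof (intro conjI ballI)
  show "S_ZIR \<subseteq> HV" unfolding S_ZIR_def using in_HV by auto
  fix x assume "x \<in> S_ZIR"
  then consider i where "i \<in> {1..r}" "x = W i" | j where "j \<in> {1..s}" "even j" "x = Y j"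
    unfolding S_ZIR_def by blast
  then show "\<exists>F. fort HV HE F \<and> S_ZIR \<inter> F = {x}"
  proof cases
    case (1 i)
    have "fort HV HE ({W i} \<union> {U} \<union> Y ` odds)"
      using fort_path_cover 1(1) path_cover_odds[OF assms] by blast
    moreover have "S_ZIR \<inter> ({W i} \<union> {U} \<union> Y ` odds) = {x}"
      using 1 unfolding S_ZIR_def odds_def by auto
    ultimately show ?thesis by blast
  next
    case (2 j)
    have "fort HV HE ({} \<union> {U} \<union> Y ` insert j odds)"
      using fort_path_cover path_cover_insert[OF path_cover_odds[OF assms] 2(1)] by blast
    moreover have "S_ZIR \<inter> ({} \<union> {U} \<union> Y ` insert j odds) = {x}"
      using 2 unfolding S_ZIR_def odds_def by auto
    ultimately show ?thesis by blast
  qed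
qed

lemma card_S_ZIR:
  assumes m: "s = 2 * m + 1"
  shows "card S_ZIR = r + m"
proof -
  have "{j \<in> {1..s}. even j} = (\<lambda>k. 2 * k) ` {1..m}"
    using m by (auto elim!: evenE simp: image_iff)
  then have "card (Y ` {j \<in> {1..s}. even j}) = m"
    by (simp add: card_image inj_on_def)
  moreover have "Ws \<inter> Y ` {j \<in> {1..s}. even j} = {}" by auto
  ultimately show ?thesis unfolding S_ZIR_def using card_Ws by (simp add: card_Un_disjoint)
qed

lemma ZIR_H: "s = 2 * m + 1 \<Longrightarrow> ZIR HV HE = r + m"
  by (rule ZIR_eqI[OF finite_HV ZIr_set_S_ZIR card_S_ZIR card_ZIr_set_le]) simp_all

end

theorem proposition3p6:
  shows "(\<forall>r s::nat. 2 \<le> r \<and> odd s \<and> 3 \<le> s \<longrightarrow>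
            zir (H_V r s) (H_E r s) = 2 \<and>
            Z (H_V r s) (H_E r s) = r \<and>
            ZIR (H_V r s) (H_E r s) = r + (s - 1) div 2)
       \<and> (\<forall>r s::nat. 2 \<le> r \<and> odd s \<and> 5 \<le> s \<longrightarrow> Zbar (H_V r s) (H_E r s) = r + 1)
       \<and> (\<forall>r::nat. 2 \<le> r \<longrightarrow> Zbar (H_V r 3) (H_E r 3) = r)"
proof -
  have "zir (H_V r s) (H_E r s) = 2 \<and> Z (H_V r s) (H_E r s) = r \<and>
      ZIR (H_V r s) (H_E r s) = r + (s - 1) div 2"
    if "2 \<le> r" "odd s" "3 \<le> s" for r s :: nat
  proof -
    interpret H_graph r s using that by unfold_locales
    obtain m where m: "s = 2 * m + 1" using \<open>odd s\<close> oddE by blast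
    then show ?thesis using zir_H Z_H ZIR_H[OF m] \<open>odd s\<close> by simp
  qed
  moreover have "Zbar (H_V r s) (H_E r s) = r + 1" if "2 \<le> r" "5 \<le> s" for r s :: nat
  proof -
    interpret H_graph r s using that by unfold_locales auto
    show ?thesis using Zbar_H_ge_5 \<open>5 \<le> s\<close> .
  qed
  moreover have "Zbar (H_V r 3) (H_E r 3) = r" if "2 \<le> r" for r :: nat
  proof -
    interpret H_graph r 3 using that by unfold_locales auto
    show ?thesis using Zbar_H_3 by simp
  qed
  ultimately show ?thesis by simp
qed

end
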